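(* Let $k=\delta n$ with $\delta = \omega(\log^{-1/3} n)$, let $G=(X\dot\cup Y,E)$ be a $k$-regular bipartite graph on $2n$ vertices, and let $(S,T)$ be a cut of $G$. Let $G_1, G_2, G_H$ be as in the context, and let $V_{low}$ be the set of vertices $x\in V\setminus\Gamma(S,T)$ with $\deg^{\mathrm{Par}}_{G_1}(x)\le \frac{1}{1000}\log n$. W.v.h.p. the following hold: (1) $|V_{low}|\le n^{0.01}$; (2) for any two distinct $x,y\in V_{low}$, the distance between $x$ and $y$ in $G_H$ is at least $6$.
   Context: $V=X\cup Y$. A cut is a pair $(S,T)$ with $S\subseteq X$, $T\subseteq Y$; cross edges w.r.t. $(S,T)$ are edges joining $S$ to $Y\setminus T$ or $X\setminus S$ to $T$, and all other edges are parallel. $\deg^{\mathrm{Cr}}_H(x)$ and $\deg^{\mathrm{Par}}_H(x)$ denote the number of cross, respectively parallel, edges of a subgraph $H$ incident to $x$. $\Gamma(S,T)=\{x\in V:\deg^{\mathrm{Cr}}_G(x)\ge n^{-1/20}k\}$. Set $p_1 = \frac{\log n - \log\log\log\log n}{k}$, $p_2 = \frac{\log n + \log\log\log\log n}{k}$; for a graph $H$, $H(p)$ retains each edge independently with probability $p$. Let $G_2\sim G(p_2)$ and $G_1\sim G_2(p_1/p_2)$. $G_H$ is obtained from $G_1$ by adding, for each isolated vertex $v$ of $G_1$, an edge chosen uniformly at random from $\{e\in E(G_2):v\in e\}$; if any such set is empty, or two vertices isolated in $G_1$ are adjacent in $G_2$, set $G_H=G_1$. A sequence of events $A_n$ holds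 with very high probability (w.v.h.p.) if $\log(\mathbb P[A_n^c])=-\Omega(\log n)$. *)

theory Defs
  imports "HOL-Probability.Probability" "HOL-Library.Extended_Nat"
begin

text \<open>Bipartite graphs with sides X, Y; an edge is a pair (x, y) with x in X and y in Y.
  A subgraph is a subset of the edge set.\<close>

definition inc :: "('a \<times> 'a) set \<Rightarrow> 'a \<Rightarrow> ('a \<times> 'a) set" where
  "inc H v = {e \<in> H. fst e = v \<or> snd e = v}"

definition adj :: "('a \<times> 'a) set \<Rightarrow> 'a \<Rightarrow> 'a \<Rightarrow> bool" where
  "adj H u v \<longleftrightarrow> (u, v) \<in> H \<or> (v, u) \<in> H"

definition bip_regular :: "'a set \<Rightarrow> 'a set \<Rightarrow> ('a \<times> 'a) set \<Rightarrow> nat \<Rightarrow> nat \<Rightarrow> bool" where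
  "bip_regular X Y E n k \<longleftrightarrow> finite X \<and> finite Y \<and> X \<inter> Y = {} \<and> card X = n \<and> card Y = n
     \<and> E \<subseteq> X \<times> Y \<and> (\<forall>v \<in> X \<union> Y. card (inc E v) = k)"

definition is_cut :: "'a set \<Rightarrow> 'a set \<Rightarrow> 'a set \<Rightarrow> 'a set \<Rightarrow> bool" where
  "is_cut X Y S T \<longleftrightarrow> S \<subseteq> X \<and> T \<subseteq> Y"

text \<open>Cross edges w.r.t. (S,T): join S to Y - T, or X - S to T (edges go from X to Y).\<close>
definition is_cross :: "'a set \<Rightarrow> 'a set \<Rightarrow> 'a \<times> 'a \<Rightarrow> bool" where
  "is_cross S T e \<longleftrightarrow> (fst e \<in> S \<and> snd e \<notin> T) \<or> (fst e \<notin> S \<and> snd e \<in> T)"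

definition deg_cr :: "'a set \<Rightarrow> 'a set \<Rightarrow> ('a \<times> 'a) set \<Rightarrow> 'a \<Rightarrow> nat" where
  "deg_cr S T H v = card {e \<in> inc H v. is_cross S T e}"

definition deg_par :: "'a set \<Rightarrow> 'a set \<Rightarrow> ('a \<times> 'a) set \<Rightarrow> 'a \<Rightarrow> nat" where
  "deg_par S T H v = card {e \<in> inc H v. \<not> is_cross S T e}"

definition Gamma :: "'a set \<Rightarrow> 'a set \<Rightarrow> ('a \<times> 'a) set \<Rightarrow> 'a set \<Rightarrow> 'a set \<Rightarrow> nat \<Rightarrow> nat \<Rightarrow> 'a set" where
  "Gamma X Y E S T n k = {x \<in> X \<union> Y. real (deg_cr S T E x) \<ge> real n powr (-1/20) * real k}"

definition Vlow :: "'a set \<Rightarrow> 'a set \<Rightarrow> ('a \<times> 'a) set \<Rightarrow> 'a set \<Rightarrow> 'a set \<Rightarrow> nat \<Rightarrow> nat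
    \<Rightarrow> ('a \<times> 'a) set \<Rightarrow> 'a set" where
  "Vlow X Y E S T n k G1 = {x \<in> (X \<union> Y) - Gamma X Y E S T n k.
      real (deg_par S T G1 x) \<le> ln (real n) / 1000}"

definition p1 :: "nat \<Rightarrow> nat \<Rightarrow> real" where
  "p1 n k = (ln (real n) - ln (ln (ln (ln (real n))))) / real k"

definition p2 :: "nat \<Rightarrow> nat \<Rightarrow> real" where
  "p2 n k = (ln (real n) + ln (ln (ln (ln (real n))))) / real k"

text \<open>Walks (as vertex lists) and graph distance (infinite if no walk exists).\<close>
fun walk :: "('a \<times> 'a) set \<Rightarrow> 'a list \<Rightarrow> bool" where
  "walk H [] = False"
| "walk H [v] = True"
| "walk H (u # v # vs) \<longleftrightarrow> adj H u v \<and> walk H (v # vs)"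

definition gdist :: "('a \<times> 'a) set \<Rightarrow> 'a \<Rightarrow> 'a \<Rightarrow> enat" where
  "gdist H x y = (INF xs \<in> {xs. walk H xs \<and> hd xs = x \<and> last xs = y}. enat (length xs - 1))"

definition random_graphs :: "'a set \<Rightarrow> ('a \<times> 'a) set \<Rightarrow> real \<Rightarrow> real
    \<Rightarrow> (('a \<times> 'a) set \<times> ('a \<times> 'a) set \<times> ('a \<times> 'a) set) pmf" where
  "random_graphs V E q1 q2 =
    bind_pmf (Pi_pmf E False (\<lambda>_. bernoulli_pmf q2)) (\<lambda>f.
    let G2 = {e \<in> E. f e} in
    bind_pmf (Pi_pmf G2 False (\<lambda>_. bernoulli_pmf (q1 / q2))) (\<lambda>g.
    let G1 = {e \<in> G2. g e};
        I = {v \<in> V. inc G1 v = {}} in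
    if (\<exists>v \<in> I. inc G2 v = {}) \<or> (\<exists>u \<in> I. \<exists>v \<in> I. adj G2 u v)
    then return_pmf (G1, G2, G1)
    else bind_pmf (Pi_pmf I undefined (\<lambda>v. pmf_of_set (inc G2 v))) (\<lambda>c.
         return_pmf (G1, G2, G1 \<union> c ` I))))"

end

(*
  Couple G1 and G2 by giving every edge of G two independent coins, the first with bias p2 and
  the second with bias p1/p2: G2 consists of the edges whose first coin shows heads, G1 of those
  where both do.  As G_H lies between G1 and G2, distances in G_H are at least those in G2, so
  it suffices to work with this product measure.

  A vertex outside Gamma(S,T) has at least (1 - n^(-1/20)) k parallel edges, each in G1 with
  probability p1.  An exponential moment bound with parameter exp (-8) shows that it is low
  with probability at most n^(8/1000) exp (-0.999 p1 k (1 - n^(-1/20))) = n^(-0.99 + o(1)),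
  and Markov's inequality gives (1).  For (2), two low vertices at G2-distance j <= 5 yield a
  path of j edges lying in G2 whose end vertices remain low even after discarding the at most
  four parallel edges that touch the path or join the two ends.  These three edge sets are
  disjoint, so the events are independent, and a union bound over the at most 2n k^j paths gives
  n (k p2)^j n^(16/1000) n^(-1.99 + o(1)) = n^(-0.98 + o(1)).
*)
theory Submission
  imports Defs "HOL-Real_Asymp.Real_Asymp"
begin

section \<open>Walks and distances\<close>

lemma walk_nonempty: "walk H w \<Longrightarrow> w \<noteq> []"
  by (cases w) auto

lemma walk_Cons: "walk H (u # w) \<longleftrightarrow> w = [] \<or> adj H u (hd w) \<and> walk H w"
  by (cases w) auto

lemma walk_append_right: "walk H (a @ b) \<Longrightarrow> b \<noteq> [] \<Longrightarrow> walk H b"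
  by (induction a) (auto simp: walk_Cons)

lemma walk_mono: "walk H w \<Longrightarrow> H \<subseteq> H' \<Longrightarrow> walk H' w"
  by (induction H w rule: walk.induct) (auto simp: adj_def)

lemma walk_nth: "walk H w \<Longrightarrow> i < length w - 1 \<Longrightarrow> adj H (w ! i) (w ! Suc i)"
proof (induction H w arbitrary: i rule: walk.induct)
  case (3 H u v vs)
  then show ?case by (cases i) auto
qed auto

lemma walk_set_subset: "walk H w \<Longrightarrow> H \<subseteq> V \<times> V \<Longrightarrow> hd w \<in> V \<Longrightarrow> set w \<subseteq> V"
  by (induction H w rule: walk.induct) (auto simp: adj_def)

lemma walk_remove_cycles:
  "walk H w \<Longrightarrow> \<exists>w'. walk H w' \<and> hd w' = hd w \<and> last w' = last w \<and> distinct w'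
      \<and> length w' \<le> length w"
proof (induction H w rule: walk.induct)
  case (1 H)
  then show ?case by simp
next
  case (2 H v)
  then show ?case by (intro exI[of _ "[v]"]) auto
next
  case (3 H u v vs)
  then obtain w where w: "walk H w" "hd w = v" "last w = last (v # vs)" "distinct w"
     "length w \<le> length (v # vs)" by auto
  show ?case
  proof (cases "u \<in> set w")
    case True
    then obtain a b where ab: "w = a @ u # b" by (meson split_list)
    then have "walk H (u # b)" using walk_append_right[of H a "u # b"] w(1) by simp
    then show ?thesis using w ab by (intro exI[of _ "u # b"]) auto
  next
    case False
    have "w \<noteq> []" using w(1) walk_nonempty by blast
    then show ?thesis using w False 3 by (intro exI[of _ "u # w"]) (auto simp: walk_Cons)
  qed
qed

lemma gdist_antimono: "H \<subseteq> H' \<Longrightarrow> gdist H' x y \<le> gdist H x y"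
  unfolding gdist_def by (rule INF_superset_mono) (use walk_mono in blast, rule order_refl)

lemma gdist_less_enatD:
  assumes "gdist H x y < enat m"
  obtains w where "walk H w" "hd w = x" "last w = y" "length w \<le> m"
proof -
  obtain w where w: "walk H w" "hd w = x" "last w = y" "enat (length w - 1) < enat m"
    using assms unfolding gdist_def INF_less_iff by blast
  then have "length w \<le> m" using walk_nonempty by (cases w) auto
  with w that show ?thesis by blast
qed

lemma distinct_walk_if_gdist_less:
  assumes "gdist H x y < enat m" "x \<noteq> y"
  obtains w where "walk H w" "hd w = x" "last w = y" "distinct w" "2 \<le> length w" "length w \<le> m"
proof -
  obtain w0 where "walk H w0" "hd w0 = x" "last w0 = y" "length w0 \<le> m"
    using assms(1) by (rule gdist_less_enatD)
  then obtain w where w: "walk H w" "hd w = x" "last w = y" "distinct w" "length w \<le> m"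
    using walk_remove_cycles by fastforce
  have "2 \<le> length w"
  proof (rule ccontr)
    assume "\<not> 2 \<le> length w"
    with walk_nonempty[OF w(1)] obtain v where "w = [v]" by (cases w) (auto simp: Suc_le_eq)
    with w(2,3) assms(2) show False by simp
  qed
  with w that show ?thesis by blast
qed

definition walks_of_length :: "'a set \<Rightarrow> ('a \<times> 'a) set \<Rightarrow> nat \<Rightarrow> 'a list set" where
  "walks_of_length V H j = {w. length w = Suc j \<and> walk H w \<and> set w \<subseteq> V}"

lemma finite_walks_of_length: "finite V \<Longrightarrow> finite (walks_of_length V H j)"
  unfolding walks_of_length_def
  by (rule finite_subset[OF _ finite_lists_length_eq[of V "Suc j"]]) auto

lemma card_adj_le_card_inc:
  assumes "finite H"
  shows "card {u. adj H u v} \<le> card (inc H v)"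
proof -
  let ?other_end = "\<lambda>e. if fst e = v then snd e else fst e"
  have "{u. adj H u v} \<subseteq> ?other_end ` inc H v"
    by (force simp: adj_def inc_def)
  then have "card {u. adj H u v} \<le> card (?other_end ` inc H v)"
    by (intro card_mono) (auto simp: inc_def assms)
  also have "\<dots> \<le> card (inc H v)"
    by (rule card_image_le) (auto simp: inc_def assms)
  finally show ?thesis .
qed

lemma card_walks_of_length_le:
  assumes V: "finite V" and HV: "H \<subseteq> V \<times> V" and deg: "\<And>v. v \<in> V \<Longrightarrow> card (inc H v) \<le> k"
  shows "card (walks_of_length V H j) \<le> card V * k ^ j"
proof (induction j)
  case 0
  have "walks_of_length V H 0 = (\<lambda>v. [v]) ` V"
    by (auto simp: walks_of_length_def length_Suc_conv)
  then show ?case by (simp add: card_image_le V)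
next
  case (Suc j)
  have fH: "finite H" using V HV finite_subset by blast
  have fadj: "finite {u. adj H u v}" for v
    by (rule finite_subset[OF _ V]) (use HV in \<open>auto simp: adj_def\<close>)
  let ?extend = "\<lambda>w. (\<lambda>u. u # w) ` {u. adj H u (hd w)}"
  have "walks_of_length V H (Suc j) \<subseteq> (\<Union>w\<in>walks_of_length V H j. ?extend w)"
  proof
    fix w assume "w \<in> walks_of_length V H (Suc j)"
    then obtain u w' where "w = u # w'" "length w' = Suc j" "walk H (u # w')" "set (u # w') \<subseteq> V"
      by (auto simp: walks_of_length_def length_Suc_conv)
    moreover from this have "w' \<in> walks_of_length V H j" "adj H u (hd w')"
      by (cases w'; auto simp: walks_of_length_def walk_Cons)+
    ultimately show "w \<in> (\<Union>w\<in>walks_of_length V H j. ?extend w)" by blast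
  qed
  then have "card (walks_of_length V H (Suc j)) \<le> card (\<Union>w\<in>walks_of_length V H j. ?extend w)"
    by (intro card_mono finite_UN_I finite_walks_of_length V finite_imageI fadj)
  also have "\<dots> \<le> (\<Sum>w\<in>walks_of_length V H j. card (?extend w))"
    by (rule card_UN_le) (rule finite_walks_of_length[OF V])
  also have "\<dots> \<le> (\<Sum>w\<in>walks_of_length V H j. k)"
  proof (rule sum_mono)
    fix w assume "w \<in> walks_of_length V H j"
    then have "hd w \<in> V" by (cases w) (auto simp: walks_of_length_def)
    have "card (?extend w) \<le> card {u. adj H u (hd w)}"
      by (rule card_image_le[OF fadj])
    also have "\<dots> \<le> card (inc H (hd w))" by (rule card_adj_le_card_inc[OF fH])
    also have "\<dots> \<le> k" using deg \<open>hd w \<in> V\<close> by auto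
    finally show "card (?extend w) \<le> k" .
  qed
  also have "\<dots> \<le> card V * k ^ j * k" using Suc by simp
  finally show ?case by (simp add: ac_simps)
qed

definition walk_edges :: "('a \<times> 'a) set \<Rightarrow> 'a list \<Rightarrow> ('a \<times> 'a) set" where
  "walk_edges H w = {e\<in>H. \<exists>i<length w - 1. e = (w!i, w!Suc i) \<or> e = (w!Suc i, w!i)}"

lemma walk_edges_rev: "walk_edges H (rev w) = walk_edges H w"
proof -
  have *: "walk_edges H w \<subseteq> walk_edges H (rev w)" for w :: "'a list"
  proof
    fix e assume "e \<in> walk_edges H w"
    then obtain i where i: "e \<in> H" "i < length w - 1" "e = (w!i, w!Suc i) \<or> e = (w!Suc i, w!i)"
      by (auto simp: walk_edges_def)
    define i' where "i' = length w - 2 - i"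
    have "rev w ! i' = w ! Suc i" "rev w ! Suc i' = w ! i" "i' < length w - 1"
      using i(2) by (auto simp: rev_nth i'_def Suc_diff_Suc)
    with i show "e \<in> walk_edges H (rev w)" by (auto simp: walk_edges_def)
  qed
  show ?thesis using *[of w] *[of "rev w"] by simp
qed

lemma card_walk_edges_ge:
  assumes H: "finite H" and w: "walk H w" "distinct w"
  shows "length w - 1 \<le> card (walk_edges H w)"
proof -
  define edge where "edge i = (if (w!i, w!Suc i) \<in> H then (w!i, w!Suc i) else (w!Suc i, w!i))" for i
  have "edge i \<in> walk_edges H w" if "i < length w - 1" for i
    using walk_nth[OF w(1) that] that by (auto simp: edge_def walk_edges_def adj_def)
  moreover have "inj_on edge {..<length w - 1}"
  proof (rule inj_onI)
    fix i j assume "i \<in> {..<length w - 1}" "j \<in> {..<length w - 1}" "edge i = edge j"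
    then show "i = j"
      using nth_eq_iff_index_eq[OF w(2)] by (auto simp: edge_def split: if_splits)
  qed
  moreover have "finite (walk_edges H w)" using H by (simp add: walk_edges_def)
  ultimately have "card {..<length w - 1} \<le> card (walk_edges H w)"
    by (intro card_inj_on_le) auto
  then show ?thesis by simp
qed

lemma walk_edges_subset:
  assumes "walk H w" "H \<subseteq> E" "E \<inter> E\<inverse> = {}"
  shows "walk_edges E w \<subseteq> H"
proof
  fix e assume "e \<in> walk_edges E w"
  then obtain i where i: "i < length w - 1" "e \<in> E" "e = (w!i, w!Suc i) \<or> e = (w!Suc i, w!i)"
    by (auto simp: walk_edges_def)
  moreover have "adj H (w!i) (w!Suc i)" by (rule walk_nth[OF assms(1) i(1)])
  ultimately show "e \<in> H" using assms(2,3) unfolding adj_def by blast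
qed

lemma walk_edges_at_hd:
  assumes "distinct w" "2 \<le> length w" "e \<in> walk_edges H w" "hd w \<in> {fst e, snd e}"
  shows "e \<in> {(hd w, w!1), (w!1, hd w)}"
proof -
  obtain i where i: "i < length w - 1" "e = (w!i, w!Suc i) \<or> e = (w!Suc i, w!i)"
    using assms(3) by (auto simp: walk_edges_def)
  have "hd w = w ! 0" using assms(2) by (cases w) auto
  have d: "w ! a = w ! b \<longleftrightarrow> a = b" if "a < length w" "b < length w" for a b
    using nth_eq_iff_index_eq[OF assms(1) that] .
  have li: "0 < length w" "i < length w" "Suc i < length w" using i(1) by auto
  have "hd w \<noteq> w ! Suc i" using d[OF li(1) li(3)] \<open>hd w = w ! 0\<close> by simp
  moreover have "hd w = w ! i \<Longrightarrow> i = 0" using d[OF li(1) li(2)] \<open>hd w = w ! 0\<close> by simp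
  ultimately have "i = 0" using i(2) assms(4) by auto
  then show ?thesis using i \<open>hd w = w ! 0\<close> by auto
qed

section \<open>Two-round edge sampling\<close>

definition edge_coins :: "'e set \<Rightarrow> real \<Rightarrow> real \<Rightarrow> ('e \<Rightarrow> bool \<times> bool) pmf" where
  "edge_coins E q r = Pi_pmf E (False, False) (\<lambda>_. pair_pmf (bernoulli_pmf q) (bernoulli_pmf r))"

abbreviation G2_of :: "'e set \<Rightarrow> ('e \<Rightarrow> bool \<times> bool) \<Rightarrow> 'e set" where
  "G2_of A h \<equiv> {e \<in> A. fst (h e)}"

abbreviation G1_of :: "'e set \<Rightarrow> ('e \<Rightarrow> bool \<times> bool) \<Rightarrow> 'e set" where
  "G1_of A h \<equiv> {e \<in> A. fst (h e) \<and> snd (h e)}"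

lemma finite_set_pmf_edge_coins: "finite E \<Longrightarrow> finite (set_pmf (edge_coins E q r))"
  unfolding edge_coins_def by (subst set_Pi_pmf) (auto intro!: finite_PiE_dflt)

lemma measure_pmf_prob_le_expectation:
  fixes Q :: "'b pmf" and f :: "'b \<Rightarrow> real"
  assumes fin: "finite (set_pmf Q)"
    and ge1: "\<And>x. x \<in> set_pmf Q \<Longrightarrow> x \<in> A \<Longrightarrow> 1 \<le> f x"
    and nonneg: "\<And>x. x \<in> set_pmf Q \<Longrightarrow> 0 \<le> f x"
  shows "measure_pmf.prob Q A \<le> measure_pmf.expectation Q f"
proof -
  have "measure_pmf.prob Q A = measure_pmf.expectation Q (indicator A)"
    by simp
  also have "\<dots> \<le> measure_pmf.expectation Q f"
    by (intro integral_mono_AE integrable_measure_pmf_finite fin AE_pmfI)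
       (auto split: split_indicator simp: ge1 nonneg)
  finally show ?thesis .
qed

lemma prob_card_greater_le:
  fixes Q :: "'b pmf" and B :: "'x \<Rightarrow> 'b set"
  assumes fin: "finite (set_pmf Q)" and V: "finite V" and N: "0 < N"
  shows "measure_pmf.prob Q {h. N < real (card {x \<in> V. h \<in> B x})}
    \<le> (\<Sum>x\<in>V. measure_pmf.prob Q (B x)) / N"
proof -
  have count: "real (card {x \<in> V. h \<in> B x}) = (\<Sum>x\<in>V. indicator (B x) h)" for h
    using V by (simp add: indicator_def sum.If_cases Int_def)
  have "measure_pmf.prob Q {h. N < real (card {x \<in> V. h \<in> B x})}
      \<le> measure_pmf.expectation Q (\<lambda>h. (\<Sum>x\<in>V. indicator (B x) h) / N)"
  proof (rule measure_pmf_prob_le_expectation[OF fin])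
    fix h show "0 \<le> (\<Sum>x\<in>V. indicator (B x) h) / N"
      using N by (auto intro!: sum_nonneg divide_nonneg_pos)
  next
    fix h assume "h \<in> {h. N < real (card {x \<in> V. h \<in> B x})}"
    then show "1 \<le> (\<Sum>x\<in>V. indicator (B x) h) / N" using N by (simp add: count)
  qed
  also have "\<dots> = (\<Sum>x\<in>V. measure_pmf.prob Q (B x)) / N"
    by (simp only: integral_divide_zero, subst Bochner_Integration.integral_sum)
       (auto intro!: integrable_measure_pmf_finite fin)
  finally show ?thesis .
qed

lemma expectation_edge_coins_prod:
  fixes F :: "'e \<Rightarrow> bool \<Rightarrow> bool \<Rightarrow> real"
  assumes "finite E" "0 \<le> q" "q \<le> 1" "0 \<le> r" "r \<le> 1" "\<And>e u v. 0 \<le> F e u v"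
  shows "measure_pmf.expectation (edge_coins E q r) (\<lambda>h. \<Prod>e\<in>E. F e (fst (h e)) (snd (h e))) =
    (\<Prod>e\<in>E. F e True True * q * r + F e True False * q * (1 - r)
             + F e False True * (1 - q) * r + F e False False * (1 - q) * (1 - r))"
proof -
  have "measure_pmf.expectation (edge_coins E q r) (\<lambda>h. \<Prod>e\<in>E. F e (fst (h e)) (snd (h e))) =
     (\<Prod>e\<in>E. measure_pmf.expectation (pair_pmf (bernoulli_pmf q) (bernoulli_pmf r))
                (\<lambda>z. F e (fst z) (snd z)))"
    unfolding edge_coins_def
    by (rule expectation_prod_Pi_pmf[where f = "\<lambda>e z. F e (fst z) (snd z)"])
       (auto intro!: integrable_measure_pmf_finite assms)
  also have "\<dots> = (\<Prod>e\<in>E. F e True True * q * r + F e True False * q * (1 - r)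
             + F e False True * (1 - q) * r + F e False False * (1 - q) * (1 - r))"
    by (intro prod.cong refl,
        subst integral_measure_pmf_real[where A="{(True,True),(True,False),(False,True),(False,False)}"])
       (auto simp: pmf_pair assms algebra_simps)
  finally show ?thesis .
qed

text \<open>Exponential moment method: on the event, the weight t^(card (G1_of A h) - a) is at
  least 1, and its expectation factorises over the edges.\<close>
lemma edge_coins_tail_bound:
  fixes t a q r :: real
  assumes E: "finite E" and PE: "P \<subseteq> E" and AE: "A \<subseteq> E" and PA: "P \<inter> A = {}"
    and t: "0 < t" "t < 1" and q: "0 \<le> q" "q \<le> 1" "0 \<le> r" "r \<le> 1"
  shows "measure_pmf.prob (edge_coins E q r) {h. P \<subseteq> G2_of E h \<and> real (card (G1_of A h)) \<le> a}
         \<le> t powr (-a) * q ^ card P * (1 - q * r * (1 - t)) ^ card A"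
proof -
  define F where "F e u v = (if e \<in> P \<and> \<not> u then 0 else 1) * (if e \<in> A \<and> u \<and> v then t else 1)"
    for e u v
  have F_nonneg: "0 \<le> F e u v" for e u v using t by (auto simp: F_def)
  define weight where "weight h = t powr (-a) * (\<Prod>e\<in>E. F e (fst (h e)) (snd (h e)))" for h
  have "measure_pmf.prob (edge_coins E q r) {h. P \<subseteq> G2_of E h \<and> real (card (G1_of A h)) \<le> a}
        \<le> measure_pmf.expectation (edge_coins E q r) weight"
  proof (rule measure_pmf_prob_le_expectation[OF finite_set_pmf_edge_coins[OF E]])
    fix h :: "'a \<Rightarrow> bool \<times> bool"
    show "0 \<le> weight h"
      unfolding weight_def by (intro mult_nonneg_nonneg prod_nonneg) (auto simp: F_nonneg)
    assume "h \<in> {h. P \<subseteq> G2_of E h \<and> real (card (G1_of A h)) \<le> a}"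
    then have hP: "\<And>e. e \<in> P \<Longrightarrow> fst (h e)" and ha: "real (card (G1_of A h)) \<le> a"
      by auto
    have "(\<Prod>e\<in>E. F e (fst (h e)) (snd (h e))) = (\<Prod>e\<in>E. if e \<in> G1_of A h then t else 1)"
      by (intro prod.cong refl) (auto simp: F_def hP)
    also have "\<dots> = t ^ card (G1_of A h)"
      using AE by (simp add: prod.If_cases E Int_absorb1 subset_iff)
    finally have "weight h = t powr (real (card (G1_of A h)) - a)"
      using t by (simp add: weight_def powr_realpow powr_diff powr_minus divide_inverse)
    also have "\<dots> \<ge> t powr 0"
      using ha t by (intro powr_mono') auto
    finally show "1 \<le> weight h" using t by simp
  qed
  also have "\<dots> = t powr (-a) *
      (\<Prod>e\<in>E. (if e \<in> P then q else 1) * (if e \<in> A then 1 - q * r * (1 - t) else 1))"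
    unfolding weight_def
    by (simp, subst expectation_edge_coins_prod[OF E q F_nonneg])
       (use PA in \<open>auto intro!: prod.cong simp: F_def algebra_simps\<close>)
  also have "\<dots> = t powr (-a) * q ^ card P * (1 - q * r * (1 - t)) ^ card A"
    using PE AE by (simp add: prod.distrib prod.If_cases E Int_absorb1)
  finally show ?thesis .
qed

lemma exp_minus_8_le: "exp (-8::real) \<le> 1/1000"
proof -
  have "(1000::real) \<le> (5/2) ^ 8" by (simp add: power_numeral_reduce)
  also have "\<dots> \<le> exp 1 ^ 8"
    using exp_lower_Taylor_quadratic[of 1] by (intro power_mono) auto
  also have "exp (1::real) ^ 8 = exp 8" by (simp flip: exp_of_nat_mult)
  finally show ?thesis by (simp add: exp_minus field_simps)
qed

lemma power_one_minus_le_exp: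
  fixes q M :: real and m :: nat
  assumes q: "0 \<le> q" "q \<le> 1" and M: "M \<le> real m"
  shows "(1 - q * (1 - exp (-8))) ^ m \<le> exp (-(999/1000) * q * M)"
proof -
  have t: "exp (-8::real) \<le> 1/1000" "0 < exp (-8::real)" using exp_minus_8_le by auto
  have "q * (1 - exp (-8)) \<le> 1" using q t by (intro mult_le_one) auto
  then have "(1 - q * (1 - exp (-8))) ^ m \<le> exp (- (q * (1 - exp (-8)))) ^ m"
    by (intro power_mono) (use exp_ge_add_one_self[of "- (q * (1 - exp (-8)))"] in auto)
  also have "\<dots> = exp (- (q * (1 - exp (-8))) * real m)"
    by (simp add: exp_of_nat_mult[symmetric] mult.commute)
  also have "\<dots> \<le> exp (-(999/1000) * q * M)"
  proof -
    have "(999/1000) * q * M \<le> (999/1000) * q * real m"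
      using q M by (intro mult_left_mono) auto
    also have "\<dots> \<le> q * (1 - exp (-8)) * real m"
    proof -
      have "q * (999/1000) \<le> q * (1 - exp (-8))" using q t by (intro mult_left_mono) auto
      then show ?thesis by (intro mult_right_mono) (auto simp: mult.commute)
    qed
    finally show ?thesis by simp
  qed
  finally show ?thesis .
qed

text \<open>With t = exp (-8), the factor t powr (- c ln x / 1000) becomes x powr (8 c / 1000), and
  1 - exp (-8) \<ge> 999/1000.\<close>
lemma edge_coins_few_hits_bound:
  fixes q r x c M :: real
  assumes E: "finite E" "P \<subseteq> E" "A \<subseteq> E" "P \<inter> A = {}"
    and q: "0 \<le> q" "q \<le> 1" "0 \<le> r" "r \<le> 1" and x: "0 < x" and M: "M \<le> real (card A)"
  shows "measure_pmf.prob (edge_coins E q r)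
           {h. P \<subseteq> G2_of E h \<and> real (card (G1_of A h)) \<le> c * (ln x / 1000)}
         \<le> x powr (8 * c / 1000) * q ^ card P * exp (-(999/1000) * (q * r) * M)"
proof -
  have qr: "0 \<le> q * r" "q * r \<le> 1" using q by (auto intro: mult_le_one)
  have "measure_pmf.prob (edge_coins E q r)
           {h. P \<subseteq> G2_of E h \<and> real (card (G1_of A h)) \<le> c * (ln x / 1000)}
        \<le> exp (-8) powr (- (c * (ln x / 1000))) * q ^ card P * (1 - q * r * (1 - exp (-8))) ^ card A"
    by (rule edge_coins_tail_bound) (use E q in auto)
  also have "exp (-8) powr (- (c * (ln x / 1000))) = x powr (8 * c / 1000)"
    using x by (simp add: powr_def)
  also have "(1 - q * r * (1 - exp (-8))) ^ card A \<le> exp (-(999/1000) * (q * r) * M)"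
    by (rule power_one_minus_le_exp[OF qr M])
  finally show ?thesis using q by (simp add: mult_left_mono)
qed

lemma random_graphs_G1_G2:
  assumes E: "finite E"
  shows "map_pmf (\<lambda>(G1, G2, GH). (G1, G2)) (random_graphs V E q1 q2) =
     map_pmf (\<lambda>h. (G1_of E h, G2_of E h)) (edge_coins E q2 (q1 / q2))"
proof -
  let ?B = "\<lambda>p. bernoulli_pmf p"
  have "map_pmf (\<lambda>(G1, G2, GH). (G1, G2)) (random_graphs V E q1 q2) =
    do {f \<leftarrow> Pi_pmf E False (\<lambda>_. ?B q2); g \<leftarrow> Pi_pmf {e \<in> E. f e} False (\<lambda>_. ?B (q1 / q2));
        return_pmf ({e \<in> {e \<in> E. f e}. g e}, {e \<in> E. f e})}"
    unfolding random_graphs_def Let_def map_bind_pmf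
    by (intro bind_pmf_cong refl) (simp add: map_bind_pmf)
  also have "\<dots> = do {f \<leftarrow> Pi_pmf E False (\<lambda>_. ?B q2); g \<leftarrow> Pi_pmf E False (\<lambda>_. ?B (q1 / q2));
        return_pmf ({e \<in> E. f e \<and> g e}, {e \<in> E. f e})}"
  proof (rule bind_pmf_cong[OF refl])
    fix f :: "'a \<times> 'a \<Rightarrow> bool"
    have "Pi_pmf {e \<in> E. f e} False (\<lambda>_. ?B (q1 / q2)) =
       map_pmf (\<lambda>g e. if e \<in> {e \<in> E. f e} then g e else False) (Pi_pmf E False (\<lambda>_. ?B (q1 / q2)))"
      by (rule Pi_pmf_subset) (auto simp: E)
    then show "do {g \<leftarrow> Pi_pmf {e \<in> E. f e} False (\<lambda>_. ?B (q1 / q2));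
          return_pmf ({e \<in> {e \<in> E. f e}. g e}, {e \<in> E. f e})} =
        do {g \<leftarrow> Pi_pmf E False (\<lambda>_. ?B (q1 / q2)); return_pmf ({e \<in> E. f e \<and> g e}, {e \<in> E. f e})}"
      by (simp only: bind_map_pmf) (intro bind_pmf_cong refl, auto)
  qed
  also have "\<dots> = map_pmf (\<lambda>h. (G1_of E h, G2_of E h)) (edge_coins E q2 (q1 / q2))"
  proof -
    have "edge_coins E q2 (q1 / q2) = Pi_pmf E (False, False)
        (\<lambda>_. do {u \<leftarrow> ?B q2; v \<leftarrow> ?B (q1 / q2); return_pmf (u, v)})"
      unfolding edge_coins_def pair_pmf_def ..
    also have "\<dots> = do {f \<leftarrow> Pi_pmf E False (\<lambda>_. ?B q2);
        Pi_pmf E (False, False) (\<lambda>e. do {v \<leftarrow> ?B (q1 / q2); return_pmf (f e, v)})}"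
      by (rule Pi_pmf_bind[OF E])
    also have "\<dots> = do {f \<leftarrow> Pi_pmf E False (\<lambda>_. ?B q2); g \<leftarrow> Pi_pmf E False (\<lambda>_. ?B (q1 / q2));
        return_pmf (\<lambda>e. if e \<in> E then (f e, g e) else (False, False))}"
      by (intro bind_pmf_cong refl, subst Pi_pmf_bind[OF E, where d'=False]) (simp add: E)
    finally show ?thesis by (simp add: map_bind_pmf) (intro bind_pmf_cong refl, auto)
  qed
  finally show ?thesis .
qed

lemma random_graphs_GH_subset_G2:
  assumes V: "finite V" and E: "finite E"
    and supp: "(G1, G2, GH) \<in> set_pmf (random_graphs V E q1 q2)"
  shows "GH \<subseteq> G2"
proof -
  from supp obtain f g where z:
    "(G1, G2, GH) \<in> set_pmf (let G2 = {e \<in> E. f e}; G1 = {e \<in> G2. g e}; I = {v \<in> V. inc G1 v = {}} in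
    if (\<exists>v \<in> I. inc G2 v = {}) \<or> (\<exists>u \<in> I. \<exists>v \<in> I. adj G2 u v)
    then return_pmf (G1, G2, G1)
    else bind_pmf (Pi_pmf I undefined (\<lambda>v. pmf_of_set (inc G2 v))) (\<lambda>c.
         return_pmf (G1, G2, G1 \<union> c ` I)))"
    unfolding random_graphs_def Let_def by (simp add: set_bind_pmf) blast
  define G2' where "G2' = {e \<in> E. f e}"
  define G1' where "G1' = {e \<in> G2'. g e}"
  define I where "I = {v \<in> V. inc G1' v = {}}"
  note z = z[unfolded G2'_def[symmetric] G1'_def[symmetric] I_def[symmetric] Let_def]
  show ?thesis
  proof (cases "(\<exists>v \<in> I. inc G2' v = {}) \<or> (\<exists>u \<in> I. \<exists>v \<in> I. adj G2' u v)")
    case True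
    then show ?thesis using z by (auto simp: G1'_def)
  next
    case False
    then obtain c where c: "c \<in> set_pmf (Pi_pmf I undefined (\<lambda>v. pmf_of_set (inc G2' v)))"
      and GH: "G2 = G2'" "GH = G1' \<union> c ` I"
      using z by (auto simp: set_bind_pmf)
    have "finite I" using V by (simp add: I_def)
    moreover have "finite (inc G2' v)" for v using E by (simp add: inc_def G2'_def)
    ultimately have "c v \<in> inc G2' v" if "v \<in> I" for v
      using c that False by (auto simp: set_Pi_pmf PiE_dflt_def)
    then show ?thesis using GH by (auto simp: G1'_def inc_def)
  qed
qed

lemma prob_random_graphs_le_edge_coins:
  assumes V: "finite V" and E: "finite E"
  shows "measure_pmf.prob (random_graphs V E q1 q2)
      {(G1, G2, GH). \<not> (C G1 \<and> (\<forall>x\<in>W G1. \<forall>y\<in>W G1. x \<noteq> y \<longrightarrow> gdist GH x y \<ge> d))}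
    \<le> measure_pmf.prob (edge_coins E q2 (q1 / q2))
      {h. \<not> (C (G1_of E h) \<and>
             (\<forall>x\<in>W (G1_of E h). \<forall>y\<in>W (G1_of E h). x \<noteq> y \<longrightarrow> gdist (G2_of E h) x y \<ge> d))}"
proof -
  define RG where "RG = random_graphs V E q1 q2"
  define Good where "Good G1 G2 \<longleftrightarrow> C G1 \<and> (\<forall>x\<in>W G1. \<forall>y\<in>W G1. x \<noteq> y \<longrightarrow> gdist G2 x y \<ge> d)"
    for G1 G2
  let ?Bad = "{(G1, G2, GH). \<not> (C G1 \<and> (\<forall>x\<in>W G1. \<forall>y\<in>W G1. x \<noteq> y \<longrightarrow> gdist GH x y \<ge> d))}"
  have "measure_pmf.prob RG ?Bad = measure_pmf.prob RG (?Bad \<inter> set_pmf RG)"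
    by (simp add: measure_Int_set_pmf)
  also have "\<dots> \<le> measure_pmf.prob RG {(G1, G2, GH). \<not> Good G1 G2}"
  proof (rule measure_pmf.finite_measure_mono)
    show "?Bad \<inter> set_pmf RG \<subseteq> {(G1, G2, GH). \<not> Good G1 G2}"
    proof
      fix z assume "z \<in> ?Bad \<inter> set_pmf RG"
      moreover obtain G1 G2 GH where z: "z = (G1, G2, GH)" by (cases z)
      ultimately have bad: "\<not> (C G1 \<and> (\<forall>x\<in>W G1. \<forall>y\<in>W G1. x \<noteq> y \<longrightarrow> gdist GH x y \<ge> d))"
        and supp: "(G1, G2, GH) \<in> set_pmf RG" by auto
      have "GH \<subseteq> G2" using random_graphs_GH_subset_G2[OF V E supp[unfolded RG_def]] .
      then have "gdist G2 x y \<le> gdist GH x y" for x y by (rule gdist_antimono)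
      then have "\<not> Good G1 G2" using bad unfolding Good_def by (meson order_trans)
      then show "z \<in> {(G1, G2, GH). \<not> Good G1 G2}" using z by simp
    qed
  qed simp
  also have "\<dots> = measure_pmf.prob (map_pmf (\<lambda>(G1, G2, GH). (G1, G2)) RG) {(G1, G2). \<not> Good G1 G2}"
    by (simp add: vimage_def case_prod_unfold)
  also have "\<dots> = measure_pmf.prob (edge_coins E q2 (q1 / q2)) {h. \<not> Good (G1_of E h) (G2_of E h)}"
    unfolding RG_def random_graphs_G1_G2[OF E] by (simp add: vimage_def)
  finally show ?thesis unfolding RG_def Good_def .
qed

section \<open>Low vertices\<close>

lemma bip_regularD:
  assumes "bip_regular X Y E n k"
  shows "finite (X \<union> Y)" "finite E" "E \<subseteq> (X \<union> Y) \<times> (X \<union> Y)" "E \<inter> E\<inverse> = {}"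
    "card (X \<union> Y) = 2 * n" "\<And>v. v \<in> X \<union> Y \<Longrightarrow> card (inc E v) = k"
  using assms unfolding bip_regular_def
  by (auto simp: card_Un_disjoint intro: finite_subset[of E "X \<times> Y"])

abbreviation par_edges :: "'a set \<Rightarrow> 'a set \<Rightarrow> ('a \<times> 'a) set \<Rightarrow> 'a \<Rightarrow> ('a \<times> 'a) set" where
  "par_edges S T H v \<equiv> {e \<in> inc H v. \<not> is_cross S T e}"

lemma card_par_edges_outside_Gamma:
  assumes bip: "bip_regular X Y E n k" and x: "x \<in> X \<union> Y" "x \<notin> Gamma X Y E S T n k"
  shows "real k - real n powr (-1/20) * real k < real (card (par_edges S T E x))"
proof -
  have "finite (inc E x)" using bip_regularD(2)[OF bip] by (simp add: inc_def)
  then have "card (inc E x) = card (par_edges S T E x) + deg_cr S T E x"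
    unfolding deg_cr_def by (subst card_Un_disjoint[symmetric]) (auto intro: arg_cong[where f = card])
  moreover have "card (inc E x) = k" using bip_regularD(6)[OF bip x(1)] .
  moreover have "real (deg_cr S T E x) < real n powr (-1/20) * real k"
    using x unfolding Gamma_def by auto
  ultimately show ?thesis by linarith
qed

lemma card_G1_of_par_edges_le:
  assumes E: "finite E" and A: "A \<subseteq> par_edges S T E x"
    and x: "x \<in> Vlow X Y E S T n k (G1_of E h)"
  shows "real (card (G1_of A h)) \<le> ln (real n) / 1000"
proof -
  have "card (G1_of A h) \<le> deg_par S T (G1_of E h) x"
    unfolding deg_par_def using A E by (intro card_mono) (auto simp: inc_def)
  then show ?thesis using x unfolding Vlow_def by auto
qed

lemma prob_many_low_vertices:
  fixes q1 q2 :: real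
  assumes bip: "bip_regular X Y E n k" and n: "0 < n"
    and q: "0 \<le> q1" "q1 \<le> q2" "0 < q2" "q2 \<le> 1"
  shows "measure_pmf.prob (edge_coins E q2 (q1 / q2))
      {h. real n powr 0.01 < real (card (Vlow X Y E S T n k (G1_of E h)))}
    \<le> 2 * real n * real n powr (8/1000) * exp (-(999/1000) * q1 * (real k - real n powr (-1/20) * real k))
       / real n powr 0.01"
proof -
  define V where "V = X \<union> Y"
  define Ga where "Ga = Gamma X Y E S T n k"
  define N where "N = real n powr 0.01"
  define Q where "Q = edge_coins E q2 (q1 / q2)"
  define low where "low x = {h. real (card (G1_of (par_edges S T E x) h)) \<le> 1 * (ln (real n) / 1000)}"
    for x
  define \<beta> where "\<beta> = real n powr (8/1000) * exp (-(999/1000) * q1 * (real k - real n powr (-1/20) * real k))"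
  have N: "0 < N" using n by (simp add: N_def)
  have fV: "finite V" and fE: "finite E" using bip_regularD[OF bip] by (simp_all add: V_def)
  have prob_low: "measure_pmf.prob Q (low x) \<le> \<beta>" if x: "x \<in> V - Ga" for x
  proof -
    have "measure_pmf.prob Q (low x) = measure_pmf.prob Q
        {h. {} \<subseteq> G2_of E h \<and> real (card (G1_of (par_edges S T E x) h)) \<le> 1 * (ln (real n) / 1000)}"
      by (simp add: low_def)
    also have "\<dots> \<le> real n powr (8 * 1 / 1000) * q2 ^ card ({} :: ('a \<times> 'a) set) *
        exp (-(999/1000) * (q2 * (q1 / q2)) * (real k - real n powr (-1/20) * real k))"
      unfolding Q_def
      by (rule edge_coins_few_hits_bound)
         (use fE q n card_par_edges_outside_Gamma[OF bip, of x S T] x in \<open>auto simp: V_def Ga_def inc_def\<close>)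
    also have "\<dots> = \<beta>" using q by (simp add: \<beta>_def)
    finally show ?thesis .
  qed
  have "{h. N < real (card (Vlow X Y E S T n k (G1_of E h)))}
      \<subseteq> {h. N < real (card {x \<in> V - Ga. h \<in> low x})}"
  proof safe
    fix h assume "N < real (card (Vlow X Y E S T n k (G1_of E h)))"
    also have "Vlow X Y E S T n k (G1_of E h) \<subseteq> {x \<in> V - Ga. h \<in> low x}"
    proof
      fix x assume x: "x \<in> Vlow X Y E S T n k (G1_of E h)"
      then have "h \<in> low x" using card_G1_of_par_edges_le[OF fE order_refl x] by (simp add: low_def)
      with x show "x \<in> {x \<in> V - Ga. h \<in> low x}" by (simp add: Vlow_def V_def Ga_def)
    qed
    then have "real (card (Vlow X Y E S T n k (G1_of E h))) \<le> real (card {x \<in> V - Ga. h \<in> low x})"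
      using fV by (intro of_nat_mono card_mono) auto
    finally show "N < real (card {x \<in> V - Ga. h \<in> low x})" .
  qed
  then have "measure_pmf.prob Q {h. N < real (card (Vlow X Y E S T n k (G1_of E h)))}
      \<le> measure_pmf.prob Q {h. N < real (card {x \<in> V - Ga. h \<in> low x})}"
    by (rule measure_pmf.finite_measure_mono) simp
  also have "\<dots> \<le> (\<Sum>x\<in>V - Ga. measure_pmf.prob Q (low x)) / N"
    using fV N unfolding Q_def by (intro prob_card_greater_le finite_set_pmf_edge_coins fE) auto
  also have "\<dots> \<le> real (card (V - Ga)) * \<beta> / N"
    using N prob_low sum_mono[of "V - Ga" "\<lambda>x. measure_pmf.prob Q (low x)" "\<lambda>_. \<beta>"]
    by (intro divide_right_mono) auto
  also have "\<dots> \<le> 2 * real n * \<beta> / N"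
  proof -
    have "card (V - Ga) \<le> 2 * n"
      using card_mono[OF fV Diff_subset] bip_regularD(5)[OF bip] by (simp add: V_def)
    then show ?thesis using N by (intro divide_right_mono mult_right_mono) (auto simp: \<beta>_def)
  qed
  finally show ?thesis by (simp add: Q_def N_def \<beta>_def mult.assoc)
qed

definition off_walk_par_edges :: "'a set \<Rightarrow> 'a set \<Rightarrow> ('a \<times> 'a) set \<Rightarrow> 'a list \<Rightarrow> ('a \<times> 'a) set" where
  "off_walk_par_edges S T E w = par_edges S T E (hd w) - (walk_edges E w \<union> inc E (last w))"

lemma off_walk_par_edges_rev:
  "w \<noteq> [] \<Longrightarrow>
    off_walk_par_edges S T E (rev w) = par_edges S T E (last w) - (walk_edges E w \<union> inc E (hd w))"
  by (simp add: off_walk_par_edges_def walk_edges_rev hd_rev last_rev)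

lemma card_Diff_ge:
  assumes "finite A" "A \<inter> B \<subseteq> C" "finite C"
  shows "real (card A) - real (card C) \<le> real (card (A - B))"
proof -
  have "card (A \<inter> B) \<le> card C" using assms by (intro card_mono) auto
  then show ?thesis using card_Int_Diff[OF assms(1), of B] by linarith
qed

lemma card_off_walk_par_edges:
  assumes bip: "bip_regular X Y E n k" and w: "distinct w" "2 \<le> length w"
    and x: "hd w \<in> X \<union> Y" "hd w \<notin> Gamma X Y E S T n k"
  shows "real k - real n powr (-1/20) * real k - 4 \<le> real (card (off_walk_par_edges S T E w))"
proof -
  let ?C = "{(hd w, w!1), (w!1, hd w), (hd w, last w), (last w, hd w)}"
  have "hd w \<noteq> last w" using w by (cases w) (auto simp: last_ConsR)
  have "par_edges S T E (hd w) \<inter> (walk_edges E w \<union> inc E (last w)) \<subseteq> ?C"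
  proof
    fix e assume e: "e \<in> par_edges S T E (hd w) \<inter> (walk_edges E w \<union> inc E (last w))"
    then have "hd w \<in> {fst e, snd e}" by (auto simp: inc_def)
    with e walk_edges_at_hd[OF w, of e E] \<open>hd w \<noteq> last w\<close> show "e \<in> ?C"
      by (cases e) (auto simp: inc_def)
  qed
  then have "real (card (par_edges S T E (hd w))) - real (card ?C)
      \<le> real (card (off_walk_par_edges S T E w))"
    unfolding off_walk_par_edges_def
    using bip_regularD(2)[OF bip] by (intro card_Diff_ge) (auto simp: inc_def)
  moreover have "card ?C \<le> 4"
    using card_length[of "[(hd w, w!1), (w!1, hd w), (hd w, last w), (last w, hd w)]"] by simp
  ultimately show ?thesis using card_par_edges_outside_Gamma[OF bip x] by linarith
qed

text \<open>The edges of w and the two sets off_walk_par_edges of w and of rev w are pairwise disjoint,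
  so the tail bound applies to them jointly.\<close>
lemma prob_walk_with_low_ends:
  fixes q1 q2 :: real
  assumes bip: "bip_regular X Y E n k" and n: "0 < n"
    and q: "0 \<le> q1" "q1 \<le> q2" "0 < q2" "q2 \<le> 1"
    and w: "walk E w" "distinct w" "length w = Suc j" "1 \<le> j"
    and ends: "hd w \<in> X \<union> Y" "hd w \<notin> Gamma X Y E S T n k"
      "last w \<in> X \<union> Y" "last w \<notin> Gamma X Y E S T n k"
  shows "measure_pmf.prob (edge_coins E q2 (q1 / q2))
      {h. walk_edges E w \<subseteq> G2_of E h \<and>
          real (card (G1_of (off_walk_par_edges S T E w \<union> off_walk_par_edges S T E (rev w)) h))
            \<le> 2 * (ln (real n) / 1000)}
    \<le> real n powr (16/1000) * q2 ^ j *
       exp (-(999/1000) * q1 * (2 * (real k - real n powr (-1/20) * real k - 4)))"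
proof -
  let ?A = "off_walk_par_edges S T E w \<union> off_walk_par_edges S T E (rev w)"
  have fE: "finite E" using bip_regularD(2)[OF bip] .
  have len2: "2 \<le> length w" using w by simp
  then have rev: "off_walk_par_edges S T E (rev w) = par_edges S T E (last w) - (walk_edges E w \<union> inc E (hd w))"
    by (intro off_walk_par_edges_rev) auto
  have "off_walk_par_edges S T E w \<inter> off_walk_par_edges S T E (rev w) = {}"
    unfolding rev by (auto simp: off_walk_par_edges_def)
  moreover have "finite (off_walk_par_edges S T E v)" for v
    using fE by (simp add: off_walk_par_edges_def inc_def)
  ultimately have "card ?A = card (off_walk_par_edges S T E w) + card (off_walk_par_edges S T E (rev w))"
    by (intro card_Un_disjoint) auto
  moreover have "real k - real n powr (-1/20) * real k - 4 \<le> real (card (off_walk_par_edges S T E w))"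
    by (rule card_off_walk_par_edges[OF bip w(2) len2 ends(1,2)])
  moreover have "real k - real n powr (-1/20) * real k - 4
      \<le> real (card (off_walk_par_edges S T E (rev w)))"
    by (rule card_off_walk_par_edges[OF bip]) (use w len2 ends in \<open>simp_all add: hd_rev\<close>)
  ultimately have card_A: "2 * (real k - real n powr (-1/20) * real k - 4) \<le> real (card ?A)"
    by simp
  have "measure_pmf.prob (edge_coins E q2 (q1 / q2))
      {h. walk_edges E w \<subseteq> G2_of E h \<and> real (card (G1_of ?A h)) \<le> 2 * (ln (real n) / 1000)}
    \<le> real n powr (8 * 2 / 1000) * q2 ^ card (walk_edges E w) *
       exp (-(999/1000) * (q2 * (q1 / q2)) * (2 * (real k - real n powr (-1/20) * real k - 4)))"
  proof (rule edge_coins_few_hits_bound[OF fE _ _ _ _ _ _ _ _ card_A])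
    show "walk_edges E w \<subseteq> E" "?A \<subseteq> E" "walk_edges E w \<inter> ?A = {}"
      unfolding rev by (auto simp: off_walk_par_edges_def inc_def walk_edges_def)
  qed (use q n in auto)
  also have "\<dots> = real n powr (16/1000) * q2 ^ card (walk_edges E w) *
       exp (-(999/1000) * q1 * (2 * (real k - real n powr (-1/20) * real k - 4)))"
    using q by simp
  also have "\<dots> \<le> real n powr (16/1000) * q2 ^ j *
       exp (-(999/1000) * q1 * (2 * (real k - real n powr (-1/20) * real k - 4)))"
    using card_walk_edges_ge[OF fE w(1,2)] w(3) q
    by (intro mult_right_mono mult_left_mono power_decreasing) auto
  finally show ?thesis .
qed

lemma close_low_vertices_walk:
  assumes bip: "bip_regular X Y E n k"
    and x: "x \<in> Vlow X Y E S T n k (G1_of E h)" and y: "y \<in> Vlow X Y E S T n k (G1_of E h)"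
    and xy: "x \<noteq> y" and close: "gdist (G2_of E h) x y < 6"
  obtains j w where "j \<in> {1..5}" "w \<in> walks_of_length (X \<union> Y) E j" "distinct w"
    "hd w = x" "last w = y" "walk_edges E w \<subseteq> G2_of E h"
    "real (card (G1_of (off_walk_par_edges S T E w \<union> off_walk_par_edges S T E (rev w)) h))
       \<le> 2 * (ln (real n) / 1000)"
proof -
  note bip = bip_regularD[OF bip]
  obtain w where w: "walk (G2_of E h) w" "hd w = x" "last w = y" "distinct w"
      "2 \<le> length w" "length w \<le> 6"
    using close xy by (auto simp: numeral_eq_enat elim: distinct_walk_if_gdist_less)
  define j where "j = length w - 1"
  have j: "j \<in> {1..5}" "length w = Suc j" using w(5,6) by (auto simp: j_def)
  have wE: "walk E w" using walk_mono[OF w(1)] by auto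
  have "x \<in> X \<union> Y" using x by (simp add: Vlow_def)
  then have "set w \<subseteq> X \<union> Y" using walk_set_subset[OF wE bip(3)] w(2) by blast
  then have "w \<in> walks_of_length (X \<union> Y) E j" using wE j by (simp add: walks_of_length_def)
  moreover have "walk_edges E w \<subseteq> G2_of E h" by (rule walk_edges_subset[OF w(1) _ bip(4)]) auto
  moreover have "real (card (G1_of (off_walk_par_edges S T E w \<union> off_walk_par_edges S T E (rev w)) h))
      \<le> 2 * (ln (real n) / 1000)"
  proof -
    have "G1_of (off_walk_par_edges S T E w \<union> off_walk_par_edges S T E (rev w)) h =
        G1_of (off_walk_par_edges S T E w) h \<union> G1_of (off_walk_par_edges S T E (rev w)) h"
      by auto
    then have "card (G1_of (off_walk_par_edges S T E w \<union> off_walk_par_edges S T E (rev w)) h) \<le>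
        card (G1_of (off_walk_par_edges S T E w) h) + card (G1_of (off_walk_par_edges S T E (rev w)) h)"
      by (simp add: card_Un_le)
    moreover have "real (card (G1_of (off_walk_par_edges S T E w) h)) \<le> ln (real n) / 1000"
      by (rule card_G1_of_par_edges_le[OF bip(2) _ x]) (auto simp: off_walk_par_edges_def w(2))
    moreover have "w \<noteq> []" using w(5) by auto
    then have "real (card (G1_of (off_walk_par_edges S T E (rev w)) h)) \<le> ln (real n) / 1000"
      by (intro card_G1_of_par_edges_le[OF bip(2) _ y]) (auto simp: off_walk_par_edges_rev w(3))
    ultimately show ?thesis by linarith
  qed
  ultimately show ?thesis using that j w by blast
qed

lemma prob_close_low_vertices:
  fixes q1 q2 :: real
  assumes bip: "bip_regular X Y E n k" and n: "0 < n"
    and q: "0 \<le> q1" "q1 \<le> q2" "0 < q2" "q2 \<le> 1"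
  shows "measure_pmf.prob (edge_coins E q2 (q1 / q2))
      {h. \<exists>x\<in>Vlow X Y E S T n k (G1_of E h). \<exists>y\<in>Vlow X Y E S T n k (G1_of E h).
            x \<noteq> y \<and> gdist (G2_of E h) x y < 6}
    \<le> (\<Sum>j\<in>{1..5}. 2 * real n * real k ^ j * (real n powr (16/1000) * q2 ^ j *
          exp (-(999/1000) * q1 * (2 * (real k - real n powr (-1/20) * real k - 4)))))"
proof -
  note bf = bip_regularD[OF bip]
  define V where "V = X \<union> Y"
  define Ga where "Ga = Gamma X Y E S T n k"
  define Q where "Q = edge_coins E q2 (q1 / q2)"
  define paths where "paths j = {w \<in> walks_of_length V E j. distinct w \<and> hd w \<notin> Ga \<and> last w \<notin> Ga}"
    for j
  define event where "event w = {h. walk_edges E w \<subseteq> G2_of E h \<and>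
      real (card (G1_of (off_walk_par_edges S T E w \<union> off_walk_par_edges S T E (rev w)) h))
        \<le> 2 * (ln (real n) / 1000)}" for w
  define \<gamma> where "\<gamma> j = real n powr (16/1000) * q2 ^ j *
      exp (-(999/1000) * q1 * (2 * (real k - real n powr (-1/20) * real k - 4)))" for j :: nat
  have fin_paths: "finite (paths j)" for j
    using finite_walks_of_length[OF bf(1)] by (simp add: paths_def V_def)
  have card_paths: "real (card (paths j)) \<le> 2 * real n * real k ^ j" for j
  proof -
    have "card (paths j) \<le> card (walks_of_length V E j)"
      using finite_walks_of_length[OF bf(1)] by (intro card_mono) (auto simp: paths_def V_def)
    also have "\<dots> \<le> card V * k ^ j"
      using bf by (intro card_walks_of_length_le) (auto simp: V_def)
    finally show ?thesis using bf(5) unfolding V_def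
      by (metis of_nat_le_iff of_nat_mult of_nat_numeral of_nat_power)
  qed
  have prob_event: "measure_pmf.prob Q (event w) \<le> \<gamma> j" if "w \<in> paths j" "1 \<le> j" for w j
  proof -
    from that have w: "walk E w" "distinct w" "length w = Suc j" "set w \<subseteq> V" "hd w \<notin> Ga" "last w \<notin> Ga"
      by (auto simp: paths_def walks_of_length_def)
    moreover from w(3) have "w \<noteq> []" by auto
    with w(4) have "hd w \<in> V" "last w \<in> V" using hd_in_set last_in_set by blast+
    ultimately show ?thesis unfolding Q_def event_def \<gamma>_def V_def Ga_def
      by (intro prob_walk_with_low_ends[OF bip n q]) (use that in auto)
  qed
  have "{h. \<exists>x\<in>Vlow X Y E S T n k (G1_of E h). \<exists>y\<in>Vlow X Y E S T n k (G1_of E h).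
            x \<noteq> y \<and> gdist (G2_of E h) x y < 6} \<subseteq> (\<Union>j\<in>{1..5}. \<Union>w\<in>paths j. event w)"
  proof clarify
    fix h x y assume x: "x \<in> Vlow X Y E S T n k (G1_of E h)" and y: "y \<in> Vlow X Y E S T n k (G1_of E h)"
      and "x \<noteq> y" "gdist (G2_of E h) x y < 6"
    then obtain j w where "j \<in> {1..5}" "w \<in> walks_of_length V E j" "distinct w" "hd w = x" "last w = y"
      "h \<in> event w"
      unfolding V_def event_def by (auto elim: close_low_vertices_walk[OF bip])
    moreover have "x \<notin> Ga" "y \<notin> Ga" using x y by (auto simp: Vlow_def Ga_def)
    ultimately show "h \<in> (\<Union>j\<in>{1..5}. \<Union>w\<in>paths j. event w)" by (auto simp: paths_def)
  qed
  then have "measure_pmf.prob Q {h. \<exists>x\<in>Vlow X Y E S T n k (G1_of E h).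
      \<exists>y\<in>Vlow X Y E S T n k (G1_of E h). x \<noteq> y \<and> gdist (G2_of E h) x y < 6}
      \<le> measure_pmf.prob Q (\<Union>j\<in>{1..5}. \<Union>w\<in>paths j. event w)"
    by (rule measure_pmf.finite_measure_mono) simp
  also have "\<dots> \<le> (\<Sum>j\<in>{1..5}. measure_pmf.prob Q (\<Union>w\<in>paths j. event w))"
    by (rule measure_pmf.finite_measure_subadditive_finite) auto
  also have "\<dots> \<le> (\<Sum>j\<in>{1..5}. \<Sum>w\<in>paths j. measure_pmf.prob Q (event w))"
    by (intro sum_mono measure_pmf.finite_measure_subadditive_finite fin_paths) auto
  also have "\<dots> \<le> (\<Sum>j\<in>{1..5}. \<Sum>w\<in>paths j. \<gamma> j)"
    by (intro sum_mono prob_event) auto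
  also have "\<dots> \<le> (\<Sum>j\<in>{1..5::nat}. 2 * real n * real k ^ j * \<gamma> j)"
    using q by (auto intro!: sum_mono mult_right_mono card_paths simp: \<gamma>_def)
  finally show ?thesis unfolding Q_def \<gamma>_def .
qed

section \<open>The parameters p1 and p2\<close>

lemma p1_p2_range:
  assumes n: "1 < real n"
    and ll: "0 \<le> ln (ln (ln (ln (real n))))" "ln (ln (ln (ln (real n)))) < ln (real n)"
    and k: "ln (real n) + ln (ln (ln (ln (real n)))) \<le> real k"
  shows "0 \<le> p1 n k" "p1 n k \<le> p2 n k" "0 < p2 n k" "p2 n k \<le> 1"
proof -
  have "0 < ln (real n)" using n by simp
  then have "0 < real k" using ll k by linarith
  then show "0 \<le> p1 n k" "p1 n k \<le> p2 n k" "0 < p2 n k" "p2 n k \<le> 1"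
    using ll k \<open>0 < ln (real n)\<close> by (auto simp: p1_def p2_def divide_right_mono)
qed

text \<open>The bounds of the two probability estimates after substituting p1 and p2; the term
  4 ln x powr (1/3) / x accounts for the four discarded edges, via k \<ge> n / ln n powr (1/3).\<close>
definition many_low_bound :: "real \<Rightarrow> real" where
  "many_low_bound x = 2 * x * x powr (8/1000) *
     exp (-(999/1000) * ((ln x - ln (ln (ln (ln x)))) * (1 - x powr (-1/20)))) / x powr 0.01"

definition close_low_bound :: "real \<Rightarrow> real" where
  "close_low_bound x = 2 * x * (\<Sum>j\<in>{1..5::nat}. (ln x + ln (ln (ln (ln x)))) ^ j) * x powr (16/1000) *
     exp (-(999/1000) * (2 * ((ln x - ln (ln (ln (ln x)))) * (1 - x powr (-1/20) - 4 * ln x powr (1/3) / x))))"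

lemma bounds_eventually_small:
  "eventually (\<lambda>x::real. many_low_bound x \<le> x powr (-1/10000) / 2
     \<and> close_low_bound x \<le> x powr (-1/10000) / 2) at_top"
proof -
  have "eventually (\<lambda>x::real. many_low_bound x \<le> x powr (-1/10000) / 2) at_top"
    unfolding many_low_bound_def by real_asymp
  moreover have "eventually (\<lambda>x::real. close_low_bound x \<le> x powr (-1/10000) / 2) at_top"
    unfolding close_low_bound_def by (simp add: numeral_eq_Suc) real_asymp
  ultimately show ?thesis by eventually_elim auto
qed

lemma parameters_eventually:
  "eventually (\<lambda>x::real. 1 < x \<and> 0 \<le> ln (ln (ln (ln x))) \<and> ln (ln (ln (ln x))) < ln x
     \<and> ln x + ln (ln (ln (ln x))) \<le> x / ln x powr (1/3)) at_top"
proof -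
  have "eventually (\<lambda>x::real. 1 < x) at_top" by real_asymp
  moreover have "eventually (\<lambda>x::real. 0 \<le> ln (ln (ln (ln x)))) at_top" by real_asymp
  moreover have "eventually (\<lambda>x::real. ln (ln (ln (ln x))) < ln x) at_top" by real_asymp
  moreover have "eventually (\<lambda>x::real. ln x + ln (ln (ln (ln x))) \<le> x / ln x powr (1/3)) at_top"
    by real_asymp
  ultimately show ?thesis by eventually_elim auto
qed

lemma prob_many_low_vertices_le_bound:
  assumes bip: "bip_regular X Y E n k" and n: "1 < real n"
    and ll: "0 \<le> ln (ln (ln (ln (real n))))" "ln (ln (ln (ln (real n)))) < ln (real n)"
    and k: "ln (real n) + ln (ln (ln (ln (real n)))) \<le> real k"
  shows "measure_pmf.prob (edge_coins E (p2 n k) (p1 n k / p2 n k))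
      {h. real n powr 0.01 < real (card (Vlow X Y E S T n k (G1_of E h)))} \<le> many_low_bound (real n)"
proof -
  have "0 < real k" using n ll k by (smt (verit) ln_gt_zero)
  have "measure_pmf.prob (edge_coins E (p2 n k) (p1 n k / p2 n k))
      {h. real n powr 0.01 < real (card (Vlow X Y E S T n k (G1_of E h)))}
    \<le> 2 * real n * real n powr (8/1000) *
       exp (-(999/1000) * (p1 n k * (real k - real n powr (-1/20) * real k))) / real n powr 0.01"
    using prob_many_low_vertices[OF bip _ p1_p2_range[OF n ll k]] n by (simp add: mult.assoc)
  also have "p1 n k * (real k - real n powr (-1/20) * real k) =
      (ln (real n) - ln (ln (ln (ln (real n))))) * (1 - real n powr (-1/20))"
    using \<open>0 < real k\<close> by (simp add: p1_def field_simps)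
  finally show ?thesis by (simp add: many_low_bound_def)
qed

lemma p1_mul_degree_ge:
  fixes \<delta> :: real
  assumes n: "1 < real n" and ll: "ln (ln (ln (ln (real n)))) < ln (real n)"
    and k: "real n / ln (real n) powr (1/3) \<le> real k"
  shows "(ln (real n) - ln (ln (ln (ln (real n))))) * (1 - \<delta> - 4 * ln (real n) powr (1/3) / real n)
    \<le> p1 n k * (real k - \<delta> * real k - 4)"
proof -
  define L where "L = ln (real n)"
  define l where "l = ln (ln (ln (ln (real n))))"
  have "0 < L" using n by (simp add: L_def)
  then have "0 < real k" using n k unfolding L_def by (smt (verit) divide_pos_pos powr_gt_zero)
  then have "1 / real k \<le> L powr (1/3) / real n"
    using k n \<open>0 < L\<close> unfolding L_def by (simp add: field_simps)
  then have "(L - l) * (4 * (1 / real k)) \<le> (L - l) * (4 * (L powr (1/3) / real n))"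
    using ll by (intro mult_left_mono) (auto simp: L_def l_def)
  moreover have "p1 n k * (real k - \<delta> * real k - 4) = (L - l) * (1 - \<delta>) - (L - l) * (4 * (1 / real k))"
    using \<open>0 < real k\<close> by (simp add: p1_def L_def l_def field_simps)
  ultimately show ?thesis unfolding L_def l_def by (simp add: algebra_simps)
qed

lemma prob_close_low_vertices_le_bound:
  assumes bip: "bip_regular X Y E n k" and n: "1 < real n"
    and ll: "0 \<le> ln (ln (ln (ln (real n))))" "ln (ln (ln (ln (real n)))) < ln (real n)"
    and k: "ln (real n) + ln (ln (ln (ln (real n)))) \<le> real k" "real n / ln (real n) powr (1/3) \<le> real k"
  shows "measure_pmf.prob (edge_coins E (p2 n k) (p1 n k / p2 n k))
      {h. \<exists>x\<in>Vlow X Y E S T n k (G1_of E h). \<exists>y\<in>Vlow X Y E S T n k (G1_of E h).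
            x \<noteq> y \<and> gdist (G2_of E h) x y < 6}
    \<le> close_low_bound (real n)"
proof -
  define L where "L = ln (real n)"
  define l where "l = ln (ln (ln (ln (real n))))"
  define \<delta> where "\<delta> = real n powr (-1/20)"
  define c where "c = real n powr (16/1000) *
    exp (-(999/1000) * (2 * ((L - l) * (1 - \<delta> - 4 * L powr (1/3) / real n))))"
  have L: "0 < L" using n by (simp add: L_def)
  have "0 < real k" using n ll k by (smt (verit) ln_gt_zero)
  have "measure_pmf.prob (edge_coins E (p2 n k) (p1 n k / p2 n k))
      {h. \<exists>x\<in>Vlow X Y E S T n k (G1_of E h). \<exists>y\<in>Vlow X Y E S T n k (G1_of E h).
            x \<noteq> y \<and> gdist (G2_of E h) x y < 6}
    \<le> (\<Sum>j\<in>{1..5}. 2 * real n * real k ^ j * (real n powr (16/1000) * p2 n k ^ j *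
          exp (-(999/1000) * p1 n k * (2 * (real k - \<delta> * real k - 4)))))"
    unfolding \<delta>_def using n by (intro prob_close_low_vertices[OF bip _ p1_p2_range[OF n ll k(1)]]) auto
  also have "\<dots> \<le> (\<Sum>j\<in>{1..5::nat}. 2 * real n * (L + l) ^ j * c)"
  proof (rule sum_mono)
    fix j :: nat
    let ?E = "exp (-(999/1000) * p1 n k * (2 * (real k - \<delta> * real k - 4)))"
    have kq: "real k ^ j * p2 n k ^ j = (L + l) ^ j"
      using \<open>0 < real k\<close> by (simp add: p2_def L_def l_def flip: power_mult_distrib)
    have "(L - l) * (1 - \<delta> - 4 * L powr (1/3) / real n) \<le> p1 n k * (real k - \<delta> * real k - 4)"
      unfolding L_def l_def by (rule p1_mul_degree_ge[OF n ll(2) k(2)])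
    then have exp_le: "?E \<le> exp (-(999/1000) * (2 * ((L - l) * (1 - \<delta> - 4 * L powr (1/3) / real n))))"
      by (simp only: exp_le_cancel_iff mult.assoc[symmetric])
    have "2 * real n * real k ^ j * (real n powr (16/1000) * p2 n k ^ j * ?E)
        = 2 * real n * (real k ^ j * p2 n k ^ j) * real n powr (16/1000) * ?E"
      by (simp only: mult_ac)
    also have "\<dots> = 2 * real n * (L + l) ^ j * real n powr (16/1000) * ?E"
      by (simp only: kq)
    also have "\<dots> \<le> 2 * real n * (L + l) ^ j * c"
      using exp_le L ll unfolding c_def mult.assoc by (intro mult_left_mono) (auto simp: l_def)
    finally show "2 * real n * real k ^ j * (real n powr (16/1000) * p2 n k ^ j * ?E)
        \<le> 2 * real n * (L + l) ^ j * c" .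
  qed
  also have "\<dots> = close_low_bound (real n)"
    by (simp add: close_low_bound_def c_def L_def l_def \<delta>_def sum_distrib_left sum_distrib_right mult_ac)
  finally show ?thesis .
qed

lemma prob_low_vertices_bad_le:
  assumes bip: "bip_regular X Y E n k" and n: "1 < real n"
    and ll: "0 \<le> ln (ln (ln (ln (real n))))" "ln (ln (ln (ln (real n)))) < ln (real n)"
    and k: "ln (real n) + ln (ln (ln (ln (real n)))) \<le> real k" "real n / ln (real n) powr (1/3) \<le> real k"
  shows "measure_pmf.prob (random_graphs (X \<union> Y) E (p1 n k) (p2 n k))
       {(G1, G2, GH). \<not> (
          real (card (Vlow X Y E S T n k G1)) \<le> real n powr 0.01
        \<and> (\<forall>x \<in> Vlow X Y E S T n k G1. \<forall>y \<in> Vlow X Y E S T n k G1. x \<noteq> y \<longrightarrow> gdist GH x y \<ge> 6))}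
     \<le> many_low_bound (real n) + close_low_bound (real n)"
proof -
  let ?Q = "edge_coins E (p2 n k) (p1 n k / p2 n k)"
  let ?Vl = "\<lambda>h. Vlow X Y E S T n k (G1_of E h)"
  have "measure_pmf.prob (random_graphs (X \<union> Y) E (p1 n k) (p2 n k))
       {(G1, G2, GH). \<not> (
          real (card (Vlow X Y E S T n k G1)) \<le> real n powr 0.01
        \<and> (\<forall>x \<in> Vlow X Y E S T n k G1. \<forall>y \<in> Vlow X Y E S T n k G1. x \<noteq> y \<longrightarrow> gdist GH x y \<ge> 6))}
     \<le> measure_pmf.prob ?Q {h. \<not> (real (card (?Vl h)) \<le> real n powr 0.01 \<and>
         (\<forall>x\<in>?Vl h. \<forall>y\<in>?Vl h. x \<noteq> y \<longrightarrow> gdist (G2_of E h) x y \<ge> 6))}"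
    using bip_regularD[OF bip] by (intro prob_random_graphs_le_edge_coins) auto
  also have "\<dots> \<le> measure_pmf.prob ?Q
      ({h. real n powr 0.01 < real (card (?Vl h))} \<union>
       {h. \<exists>x\<in>?Vl h. \<exists>y\<in>?Vl h. x \<noteq> y \<and> gdist (G2_of E h) x y < 6})"
    by (rule measure_pmf.finite_measure_mono) (auto simp: not_le)
  also have "\<dots> \<le> measure_pmf.prob ?Q {h. real n powr 0.01 < real (card (?Vl h))} +
      measure_pmf.prob ?Q {h. \<exists>x\<in>?Vl h. \<exists>y\<in>?Vl h. x \<noteq> y \<and> gdist (G2_of E h) x y < 6}"
    by (rule measure_Un_le) auto
  also have "\<dots> \<le> many_low_bound (real n) + close_low_bound (real n)"
    by (intro add_mono prob_many_low_vertices_le_bound prob_close_low_vertices_le_bound bip n ll k)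
  finally show ?thesis .
qed

theorem lemma3p5:
  fixes X Y S T :: "nat \<Rightarrow> 'a set" and E :: "nat \<Rightarrow> ('a \<times> 'a) set" and k :: "nat \<Rightarrow> nat"
  assumes delta: "filterlim (\<lambda>n. real (k n) / real n * ln (real n) powr (1/3)) at_top sequentially"
    and graphs: "eventually (\<lambda>n. bip_regular (X n) (Y n) (E n) n (k n) \<and> is_cut (X n) (Y n) (S n) (T n))
                   sequentially"
  shows "\<exists>c>0. eventually (\<lambda>n.
     measure_pmf.prob (random_graphs (X n \<union> Y n) (E n) (p1 n (k n)) (p2 n (k n)))
       {(G1, G2, GH). \<not> (
          real (card (Vlow (X n) (Y n) (E n) (S n) (T n) n (k n) G1)) \<le> real n powr 0.01
        \<and> (\<forall>x \<in> Vlow (X n) (Y n) (E n) (S n) (T n) n (k n) G1.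
             \<forall>y \<in> Vlow (X n) (Y n) (E n) (S n) (T n) n (k n) G1.
               x \<noteq> y \<longrightarrow> gdist GH x y \<ge> 6))}
     \<le> real n powr (- c)) sequentially"
proof (intro exI[of _ "1/10000"] conjI)
  have bounds: "eventually (\<lambda>n. many_low_bound (real n) \<le> real n powr (-1/10000) / 2
      \<and> close_low_bound (real n) \<le> real n powr (-1/10000) / 2) sequentially"
    and params: "eventually (\<lambda>n. 1 < real n \<and> 0 \<le> ln (ln (ln (ln (real n))))
      \<and> ln (ln (ln (ln (real n)))) < ln (real n)
      \<and> ln (real n) + ln (ln (ln (ln (real n)))) \<le> real n / ln (real n) powr (1/3)) sequentially"
    using bounds_eventually_small parameters_eventually filterlim_real_sequentially
    unfolding filterlim_iff by blast+
  have "eventually (\<lambda>n. 1 \<le> real (k n) / real n * ln (real n) powr (1/3)) sequentially"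
    using delta unfolding filterlim_at_top by blast
  with params have k_large: "eventually (\<lambda>n. real n / ln (real n) powr (1/3) \<le> real (k n)) sequentially"
    by eventually_elim (simp add: field_simps)
  show "eventually (\<lambda>n.
     measure_pmf.prob (random_graphs (X n \<union> Y n) (E n) (p1 n (k n)) (p2 n (k n)))
       {(G1, G2, GH). \<not> (
          real (card (Vlow (X n) (Y n) (E n) (S n) (T n) n (k n) G1)) \<le> real n powr 0.01
        \<and> (\<forall>x \<in> Vlow (X n) (Y n) (E n) (S n) (T n) n (k n) G1.
             \<forall>y \<in> Vlow (X n) (Y n) (E n) (S n) (T n) n (k n) G1.
               x \<noteq> y \<longrightarrow> gdist GH x y \<ge> 6))}
     \<le> real n powr (- (1/10000))) sequentially"
    using bounds params k_large graphs
  proof eventually_elim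
    case (elim n)
    then show ?case
      by (intro order_trans[OF prob_low_vertices_bad_le]) auto
  qed
qed simp

end
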